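(* Let $k\ge1$ and let $\zeta_1,\dots,\zeta_k>0$, $\alpha_1,\dots,\alpha_k>0$ be real. Let $x_1,\dots,x_k$ be mutually independent, $x_j$ having the type-1 beta density $$f_j(x_j)=\frac{\Gamma(\zeta_j+\alpha_j)}{\Gamma(\zeta_j)\Gamma(\alpha_j)}x_j^{\zeta_j-1}(1-x_j)^{\alpha_j-1},\quad 0<x_j<1,$$ and $0$ elsewhere. Let $(v_1,\dots,v_k)$ be a vector of positive real random variables with an arbitrary joint density $f(v_1,\dots,v_k)$ on $(0,\infty)^k$, independent of $(x_1,\dots,x_k)$. Put $u_j=v_j/x_j$, $j=1,\dots,k$, and let $g(u_1,\dots,u_k)$ be the joint density of $(u_1,\dots,u_k)$. Then, for (almost every) $(u_1,\dots,u_k)\in(0,\infty)^k$, $$\Big\{\prod_{j=1}^k\frac{\Gamma(\zeta_j)}{\Gamma(\zeta_j+\alpha_j)}\Big\}g(u_1,\dots,u_k)=I_{u_j,j=1,\dots,k}^{(\zeta_j,\alpha_j),j=1,\dots,k}f(u_1,\dots,u_k).$$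
   Context: The multivariable Kober fractional integral operator of the first kind is defined by $$I_{u_j,j=1,\dots,k}^{(\zeta_j,\alpha_j),j=1,\dots,k}f(u_1,\dots,u_k)=\Big\{\prod_{j=1}^k\frac{u_j^{-\zeta_j-\alpha_j}}{\Gamma(\alpha_j)}\Big\}\int_{0}^{u_1}\cdots\int_{0}^{u_k}\Big\{\prod_{j=1}^k(u_j-v_j)^{\alpha_j-1}v_j^{\zeta_j}\Big\}f(v_1,\dots,v_k)\,dv_1\cdots dv_k.$$ *)

theory Defs
  imports "HOL-Probability.Probability"
begin

text \<open>Points of R^k are represented as extensional functions on the index set {..<k}
  (elements of PiE {..<k} (\<lambda>_. UNIV)), with Lebesgue measure given by the product
  measure PiM {..<k} (\<lambda>_. lborel).\<close>

abbreviation lborelk :: "nat \<Rightarrow> (nat \<Rightarrow> real) measure" where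
  "lborelk k \<equiv> PiM {..<k} (\<lambda>_. lborel)"

definition beta1_density :: "real \<Rightarrow> real \<Rightarrow> real \<Rightarrow> real" where
  "beta1_density \<zeta> \<alpha> x =
     (if 0 < x \<and> x < 1
      then Gamma (\<zeta> + \<alpha>) / (Gamma \<zeta> * Gamma \<alpha>) * x powr (\<zeta> - 1) * (1 - x) powr (\<alpha> - 1)
      else 0)"

definition kober :: "nat \<Rightarrow> (nat \<Rightarrow> real) \<Rightarrow> (nat \<Rightarrow> real) \<Rightarrow> ((nat \<Rightarrow> real) \<Rightarrow> real)
                      \<Rightarrow> (nat \<Rightarrow> real) \<Rightarrow> real" where
  "kober k \<zeta> \<alpha> f u =
     (\<Prod>j<k. u j powr (- \<zeta> j - \<alpha> j) / Gamma (\<alpha> j)) *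
     (LINT v : (PiE {..<k} (\<lambda>j. {0..u j})) | lborelk k.
        (\<Prod>j<k. (u j - v j) powr (\<alpha> j - 1) * v j powr (\<zeta> j)) * f v)"

end

theory Submission
  imports Defs
begin

text \<open>Conditionally on \<open>V = v\<close>, the quotients \<open>u\<^sub>j = v\<^sub>j / x\<^sub>j\<close> are independent, and the
  substitution \<open>x = v\<^sub>j / u\<^sub>j\<close> turns the beta density of \<open>x\<^sub>j\<close> into
  \<open>\<Gamma>(\<zeta>\<^sub>j + \<alpha>\<^sub>j) / (\<Gamma>(\<zeta>\<^sub>j) \<Gamma>(\<alpha>\<^sub>j)) v\<^sub>j\<^bsup>\<zeta>\<^sub>j\<^esup> (u\<^sub>j - v\<^sub>j)\<^bsup>\<alpha>\<^sub>j - 1\<^esup> u\<^sub>j\<^bsup>-\<zeta>\<^sub>j - \<alpha>\<^sub>j\<^esup>\<close> on \<open>0 < v\<^sub>j < u\<^sub>j\<close>.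
  Averaging the product of these densities against the density \<open>f\<close> of \<open>V\<close> (Fubini) yields the
  density of \<open>(u\<^sub>1, \<dots>, u\<^sub>k)\<close>, which is the Kober integral of \<open>f\<close> up to the factor
  \<open>\<Prod>\<^sub>j \<Gamma>(\<zeta>\<^sub>j + \<alpha>\<^sub>j) / \<Gamma>(\<zeta>\<^sub>j)\<close>.\<close>

definition quotient_density :: "(real \<Rightarrow> ennreal) \<Rightarrow> real \<Rightarrow> real \<Rightarrow> ennreal" where
  "quotient_density h c u = h (c / u) * ennreal (c / u\<^sup>2)"

lemma measurable_quotient_density[measurable]:
  assumes [measurable]: "h \<in> borel_measurable borel"
    "c \<in> borel_measurable M" "u \<in> borel_measurable M"
  shows "(\<lambda>x. quotient_density h (c x) (u x)) \<in> borel_measurable M"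
  unfolding quotient_density_def by measurable

lemma nn_integral_divide_substitution_interval:
  fixes F :: "real \<Rightarrow> ennreal"
  assumes [measurable]: "F \<in> borel_measurable borel" and "0 < c" "0 < a" "a < b"
  shows "(\<integral>\<^sup>+ t. F t * indicator {a..b} t \<partial>lborel)
       = (\<integral>\<^sup>+ u. F (c / u) * ennreal (c / u\<^sup>2) * indicator {c / b..c / a} u \<partial>lborel)"
proof -
  have "(\<integral>\<^sup>+ t. F t * indicator {- c / (- c / a)..- c / (- c / b)} t \<partial>lborel)
      = (\<integral>\<^sup>+ x. F (- c / x) * ennreal (c / x\<^sup>2) * indicator {- c / a..- c / b} x \<partial>lborel)"
    using assms
    by (intro nn_integral_substitution_aux[where g = "\<lambda>x. - c / x"])
       (auto intro!: derivative_eq_intros continuous_intros simp: power2_eq_square field_simps)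
  also have "\<dots> = (\<integral>\<^sup>+ u. F (c / u) * ennreal (c / u\<^sup>2) * indicator {c / b..c / a} u \<partial>lborel)"
    by (subst nn_integral_real_affine[where c = "-1" and t = 0])
       (auto intro!: nn_integral_cong split: split_indicator)
  finally show ?thesis
    using assms by simp
qed

lemma UN_scaled_intervals:
  fixes r :: real
  assumes "0 < r"
  shows "(\<Union>n. {r / (real n + 2)..r * (real n + 2)}) = {0<..}"
proof (intro equalityI subsetI)
  fix x :: real assume "x \<in> {0<..}"
  then have x: "0 < x" by simp
  obtain n :: nat where n: "x / r + r / x < real n"
    using reals_Archimedean2 by blast
  have "r / x < real n + 2" "x / r < real n + 2"
    using n x assms by (smt (verit) divide_pos_pos)+
  then have "r / (real n + 2) \<le> x" "x \<le> r * (real n + 2)"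
    using x assms by (simp_all add: divide_le_eq pos_divide_less_eq mult.commute less_imp_le)
  then show "x \<in> (\<Union>n. {r / (real n + 2)..r * (real n + 2)})" by auto
next
  fix x assume "x \<in> (\<Union>n. {r / (real n + 2)..r * (real n + 2)})"
  then obtain n where "r / (real n + 2) \<le> x" by auto
  moreover have "0 < r / (real n + 2)" using assms by simp
  ultimately show "x \<in> {0<..}" by simp
qed

lemma incseq_scaled_intervals:
  fixes r :: real
  assumes "0 < r"
  shows "incseq (\<lambda>n. {r / (real n + 2)..r * (real n + 2)})"
proof (intro monoI subsetI)
  fix m n :: nat and x assume "m \<le> n" "x \<in> {r / (real m + 2)..r * (real m + 2)}"
  moreover have "r / (real n + 2) \<le> r / (real m + 2)" "r * (real m + 2) \<le> r * (real n + 2)"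
    using \<open>m \<le> n\<close> assms by (simp_all add: frac_le)
  ultimately show "x \<in> {r / (real n + 2)..r * (real n + 2)}" by auto
qed

text \<open>The compact case is exhausted by the intervals above, with \<open>[1/(n+2), n+2]\<close> on the
  \<open>t\<close>-side corresponding to \<open>[c/(n+2), c (n+2)]\<close> on the \<open>u\<close>-side.\<close>

lemma nn_integral_divide_substitution:
  fixes F :: "real \<Rightarrow> ennreal"
  assumes [measurable]: "F \<in> borel_measurable borel" and "0 < c"
    and F0: "\<And>t. t \<le> 0 \<Longrightarrow> F t = 0"
  shows "(\<integral>\<^sup>+ t. F t \<partial>lborel) = (\<integral>\<^sup>+ u. F (c / u) * ennreal (c / u\<^sup>2) \<partial>lborel)"
proof -
  define G where "G u = F (c / u) * ennreal (c / u\<^sup>2)" for u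
  have [measurable]: "G \<in> borel_measurable borel"
    unfolding G_def by measurable
  have G0: "G u = 0" if "u \<le> 0" for u
    using that \<open>0 < c\<close> F0[of "c / u"] by (auto simp: G_def divide_nonneg_nonpos)
  have on_half_line: "(\<integral>\<^sup>+ t. H t \<partial>lborel) = emeasure (density lborel H) {0<..}"
    if [measurable]: "H \<in> borel_measurable borel" and "\<And>t. t \<le> 0 \<Longrightarrow> H t = 0"
    for H :: "real \<Rightarrow> ennreal"
    using that(2) by (auto simp: emeasure_density not_less intro!: nn_integral_cong split: split_indicator)
  have "emeasure (density lborel F) {1 / (real n + 2)..1 * (real n + 2)}
      = emeasure (density lborel G) {c / (real n + 2)..c * (real n + 2)}" for n
  proof -
    have "1 / (real n + 2) < real n + 2"
      by (rule less_le_trans[of _ 1]) auto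
    then show ?thesis
      using nn_integral_divide_substitution_interval[of F c "1 / (real n + 2)" "real n + 2"] \<open>0 < c\<close>
      by (simp add: emeasure_density G_def)
  qed
  then have "(SUP n. emeasure (density lborel F) {1 / (real n + 2)..1 * (real n + 2)})
      = (SUP n. emeasure (density lborel G) {c / (real n + 2)..c * (real n + 2)})"
    by simp
  then have "emeasure (density lborel F) {0<..} = emeasure (density lborel G) {0<..}"
    using \<open>0 < c\<close> incseq_scaled_intervals[of 1] UN_scaled_intervals[of 1]
    by (subst (asm) (1 2) SUP_emeasure_incseq)
       (auto simp: incseq_scaled_intervals UN_scaled_intervals)
  then show ?thesis
    using on_half_line[of F] on_half_line[of G] F0 G0 by (simp add: G_def)
qed

lemma distr_divide_density:
  assumes [measurable]: "h \<in> borel_measurable borel" and "0 < c"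
    and h0: "\<And>t. t \<le> 0 \<Longrightarrow> h t = 0"
  shows "distr (density lborel h) lborel (\<lambda>t. c / t) = density lborel (quotient_density h c)"
proof (rule measure_eqI)
  fix S assume "S \<in> sets (distr (density lborel h) lborel (\<lambda>t. c / t))"
  then have [measurable]: "S \<in> sets borel" by simp
  have "(\<lambda>t. c / t) -` S \<in> sets lborel"
    using measurable_sets[of "\<lambda>t. c / t" borel borel S] by simp
  then have "emeasure (distr (density lborel h) lborel (\<lambda>t. c / t)) S
      = (\<integral>\<^sup>+ t. h t * indicator S (c / t) \<partial>lborel)"
    by (subst emeasure_distr) (auto simp: emeasure_density intro!: nn_integral_cong split: split_indicator)
  also have "\<dots> = (\<integral>\<^sup>+ u. h (c / u) * indicator S (c / (c / u)) * ennreal (c / u\<^sup>2) \<partial>lborel)"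
    using \<open>0 < c\<close> h0
    by (intro nn_integral_divide_substitution[where F = "\<lambda>t. h t * indicator S (c / t)"]) auto
  also have "\<dots> = emeasure (density lborel (quotient_density h c)) S"
    using \<open>0 < c\<close>
    by (auto simp: emeasure_density quotient_density_def intro!: nn_integral_cong
        split: split_indicator)
  finally show "emeasure (distr (density lborel h) lborel (\<lambda>t. c / t)) S
      = emeasure (density lborel (quotient_density h c)) S" .
qed simp

lemma indicator_PiE_eq_prod:
  assumes "finite I" "x \<in> extensional I"
  shows "(indicator (PiE I A) x :: 'b :: comm_semiring_1) = (\<Prod>i\<in>I. indicator (A i) (x i))"
proof (cases "x \<in> PiE I A")
  case False
  then obtain i where "i \<in> I" "x i \<notin> A i"
    using assms(2) by (auto simp: PiE_iff)
  then have "(\<Prod>i\<in>I. indicator (A i) (x i) :: 'b) = 0"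
    using assms(1) by (intro prod_zero bexI[of _ i]) simp_all
  then show ?thesis
    using False by simp
qed (simp add: PiE_iff)

lemma PiM_density:
  fixes M :: "'i \<Rightarrow> 'a measure" and h :: "'i \<Rightarrow> 'a \<Rightarrow> ennreal"
  assumes "finite I" "product_sigma_finite M"
    and [measurable]: "\<And>i. i \<in> I \<Longrightarrow> h i \<in> borel_measurable (M i)"
    and sf: "\<And>i. i \<in> I \<Longrightarrow> sigma_finite_measure (density (M i) (h i))"
  shows "density (PiM I M) (\<lambda>x. \<Prod>i\<in>I. h i (x i)) = PiM I (\<lambda>i. density (M i) (h i))"
proof -
  interpret M: product_sigma_finite M by fact
  define N where "N i = (if i \<in> I then density (M i) (h i) else M i)" for i
  interpret N: product_sigma_finite N
    using sf M.sigma_finite_measures by (simp add: product_sigma_finite_def N_def)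
  have "density (PiM I M) (\<lambda>x. \<Prod>i\<in>I. h i (x i)) = PiM I N"
  proof (rule N.PiM_eqI[OF \<open>finite I\<close>])
    show "sets (density (PiM I M) (\<lambda>x. \<Prod>i\<in>I. h i (x i))) = sets (PiM I N)"
      by (simp add: N_def cong: sets_PiM_cong)
    fix A assume A: "\<And>i. i \<in> I \<Longrightarrow> A i \<in> sets (N i)"
    then have [measurable]: "\<And>i. i \<in> I \<Longrightarrow> A i \<in> sets (M i)"
      by (simp add: N_def)
    have "emeasure (density (PiM I M) (\<lambda>x. \<Prod>i\<in>I. h i (x i))) (PiE I A)
        = (\<integral>\<^sup>+ x. (\<Prod>i\<in>I. h i (x i) * indicator (A i) (x i)) \<partial>PiM I M)"
      using \<open>finite I\<close>
      by (subst emeasure_density)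
         (auto simp: indicator_PiE_eq_prod space_PiM PiE_iff prod.distrib intro!: nn_integral_cong)
    also have "\<dots> = (\<Prod>i\<in>I. \<integral>\<^sup>+ t. h i t * indicator (A i) t \<partial>M i)"
      using \<open>finite I\<close> by (intro M.product_nn_integral_prod) auto
    also have "\<dots> = (\<Prod>i\<in>I. emeasure (N i) (A i))"
      by (intro prod.cong refl) (simp add: N_def emeasure_density)
    finally show "emeasure (density (PiM I M) (\<lambda>x. \<Prod>i\<in>I. h i (x i))) (PiE I A)
        = (\<Prod>i\<in>I. emeasure (N i) (A i))" .
  qed
  also have "\<dots> = PiM I (\<lambda>i. density (M i) (h i))"
    by (intro PiM_cong) (simp_all add: N_def)
  finally show ?thesis .
qed

lemma sigma_finite_PiM_lborel:
  assumes "finite I"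
  shows "sigma_finite_measure (PiM I (\<lambda>_. lborel :: real measure))"
proof -
  interpret product_sigma_finite "\<lambda>_. lborel :: real measure" ..
  show ?thesis
    using assms by (rule sigma_finite)
qed

lemma (in prob_space) distr_divide_indep_vars:
  fixes X :: "'i \<Rightarrow> 'a \<Rightarrow> real" and h :: "'i \<Rightarrow> real \<Rightarrow> ennreal" and c :: "'i \<Rightarrow> real"
  assumes "finite I" "I \<noteq> {}"
    and indep: "indep_vars (\<lambda>_. lborel) X I"
    and X: "\<And>i. i \<in> I \<Longrightarrow> distributed M lborel (X i) (h i)"
    and X_pos: "\<And>i t. i \<in> I \<Longrightarrow> t \<le> 0 \<Longrightarrow> h i t = 0"
    and c: "\<And>i. i \<in> I \<Longrightarrow> 0 < c i"
  shows "distr M (PiM I (\<lambda>_. lborel)) (\<lambda>\<omega>. \<lambda>i\<in>I. c i / X i \<omega>)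
       = density (PiM I (\<lambda>_. lborel)) (\<lambda>u. \<Prod>i\<in>I. quotient_density (h i) (c i) (u i))"
proof -
  have [measurable]: "X i \<in> borel_measurable M" "h i \<in> borel_measurable borel" if "i \<in> I" for i
    using distributed_measurable[OF X] distributed_borel_measurable[OF X] that by auto
  have quotient: "distr M lborel (\<lambda>\<omega>. c i / X i \<omega>) = density lborel (quotient_density (h i) (c i))"
    if "i \<in> I" for i
  proof -
    have "distr M lborel (\<lambda>\<omega>. c i / X i \<omega>) = distr (distr M lborel (X i)) lborel (\<lambda>t. c i / t)"
      using that by (subst distr_distr) (auto simp: comp_def)
    also have "\<dots> = density lborel (quotient_density (h i) (c i))"
      using that c X_pos
      by (simp add: distributed_distr_eq_density[OF X[OF that]] distr_divide_density)
    finally show ?thesis .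
  qed
  have "indep_vars (\<lambda>_. lborel) (\<lambda>i \<omega>. c i / X i \<omega>) I"
    by (rule indep_vars_compose2[OF indep]) simp
  then have "distr M (PiM I (\<lambda>_. lborel)) (\<lambda>\<omega>. \<lambda>i\<in>I. c i / X i \<omega>)
      = PiM I (\<lambda>i. distr M lborel (\<lambda>\<omega>. c i / X i \<omega>))"
    using \<open>I \<noteq> {}\<close> by (subst (asm) indep_vars_iff_distr_eq_PiM') auto
  also have "\<dots> = PiM I (\<lambda>i. density lborel (quotient_density (h i) (c i)))"
    by (intro PiM_cong) (simp_all add: quotient)
  also have "\<dots> = density (PiM I (\<lambda>_. lborel)) (\<lambda>u. \<Prod>i\<in>I. quotient_density (h i) (c i) (u i))"
  proof (rule PiM_density[symmetric, OF \<open>finite I\<close>])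
    show "product_sigma_finite (\<lambda>_. lborel :: real measure)" ..
    show "sigma_finite_measure (density lborel (quotient_density (h i) (c i)))" if "i \<in> I" for i
      using prob_space_distr[of "\<lambda>\<omega>. c i / X i \<omega>" lborel] that
      by (simp add: quotient prob_space_imp_sigma_finite)
  qed simp
  finally show ?thesis .
qed

lemma (in prob_space) nn_integral_indep_var:
  assumes indep: "indep_var S Y T V" and [measurable]: "\<phi> \<in> borel_measurable (S \<Otimes>\<^sub>M T)"
  shows "(\<integral>\<^sup>+ \<omega>. \<phi> (Y \<omega>, V \<omega>) \<partial>M) = (\<integral>\<^sup>+ v. (\<integral>\<^sup>+ \<omega>. \<phi> (Y \<omega>, v) \<partial>M) \<partial>distr M T V)"
proof -
  let ?P = "distr M S Y" and ?Q = "distr M T V"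
  have [measurable]: "Y \<in> measurable M S" "V \<in> measurable M T"
    using indep_var_rv1[OF indep] indep_var_rv2[OF indep] by auto
  interpret PQ: pair_sigma_finite ?P ?Q
    by (intro pair_sigma_finite.intro prob_space_imp_sigma_finite prob_space_distr) simp_all
  have "?P \<Otimes>\<^sub>M ?Q = distr M (S \<Otimes>\<^sub>M T) (\<lambda>\<omega>. (Y \<omega>, V \<omega>))"
    using indep indep_var_distribution_eq by blast
  then have "(\<integral>\<^sup>+ \<omega>. \<phi> (Y \<omega>, V \<omega>) \<partial>M) = integral\<^sup>N (?P \<Otimes>\<^sub>M ?Q) \<phi>"
    by (simp add: nn_integral_distr)
  also have "\<dots> = (\<integral>\<^sup>+ v. (\<integral>\<^sup>+ y. \<phi> (y, v) \<partial>?P) \<partial>?Q)"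
  proof (rule PQ.nn_integral_snd[symmetric])
    have "sets (?P \<Otimes>\<^sub>M ?Q) = sets (S \<Otimes>\<^sub>M T)"
      by (intro sets_pair_measure_cong) simp_all
    then show "\<phi> \<in> borel_measurable (?P \<Otimes>\<^sub>M ?Q)"
      by (simp cong: measurable_cong_sets)
  qed
  also have "\<dots> = (\<integral>\<^sup>+ v. (\<integral>\<^sup>+ \<omega>. \<phi> (Y \<omega>, v) \<partial>M) \<partial>?Q)"
  proof (rule nn_integral_cong)
    fix v assume "v \<in> space ?Q"
    then have "(\<lambda>y. \<phi> (y, v)) \<in> borel_measurable S"
      by simp
    then show "(\<integral>\<^sup>+ y. \<phi> (y, v) \<partial>?P) = (\<integral>\<^sup>+ \<omega>. \<phi> (Y \<omega>, v) \<partial>M)"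
      by (subst nn_integral_distr) simp_all
  qed
  finally show ?thesis .
qed

lemma (in prob_space) distributed_indep_mixture:
  fixes Y V :: "'a \<Rightarrow> 'b" and \<Phi> :: "'b \<times> 'b \<Rightarrow> 'c" and K :: "'b \<Rightarrow> 'c \<Rightarrow> ennreal"
  assumes indep: "indep_var S Y T V"
    and V: "distributed M T V f"
    and [measurable]: "\<Phi> \<in> measurable (S \<Otimes>\<^sub>M T) R"
    and "sigma_finite_measure T" "sigma_finite_measure R"
    and [measurable]: "case_prod K \<in> borel_measurable (T \<Otimes>\<^sub>M R)"
    and mixands: "\<And>v. v \<in> space T \<Longrightarrow> f v \<noteq> 0 \<Longrightarrow>
                   distr M R (\<lambda>\<omega>. \<Phi> (Y \<omega>, v)) = density R (K v)"
  shows "distributed M R (\<lambda>\<omega>. \<Phi> (Y \<omega>, V \<omega>)) (\<lambda>u. \<integral>\<^sup>+ v. f v * K v u \<partial>T)"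
proof -
  interpret T: sigma_finite_measure T by fact
  interpret R: sigma_finite_measure R by fact
  interpret TR: pair_sigma_finite T R ..
  have [measurable]: "Y \<in> measurable M S" "V \<in> measurable M T" "f \<in> borel_measurable T"
    using indep_var_rv1[OF indep] indep_var_rv2[OF indep] distributed_borel_measurable[OF V]
    by auto
  have "emeasure (distr M R (\<lambda>\<omega>. \<Phi> (Y \<omega>, V \<omega>))) A
      = emeasure (density R (\<lambda>u. \<integral>\<^sup>+ v. f v * K v u \<partial>T)) A" if [measurable]: "A \<in> sets R" for A
  proof -
    have mixand: "f v * (\<integral>\<^sup>+ \<omega>. indicator A (\<Phi> (Y \<omega>, v)) \<partial>M) = (\<integral>\<^sup>+ u. f v * K v u * indicator A u \<partial>R)"
      if "v \<in> space T" for v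
    proof (cases "f v = 0")
      case False
      have "(\<lambda>\<omega>. \<Phi> (Y \<omega>, v)) \<in> measurable M R"
        using that by measurable
      then have "(\<integral>\<^sup>+ \<omega>. indicator A (\<Phi> (Y \<omega>, v)) \<partial>M) = emeasure (distr M R (\<lambda>\<omega>. \<Phi> (Y \<omega>, v))) A"
        by (simp add: nn_integral_distr flip: nn_integral_indicator)
      then show ?thesis
        using that False
        by (simp add: mixands emeasure_density mult.assoc flip: nn_integral_cmult)
    qed simp
    have "emeasure (distr M R (\<lambda>\<omega>. \<Phi> (Y \<omega>, V \<omega>))) A = (\<integral>\<^sup>+ \<omega>. indicator A (\<Phi> (Y \<omega>, V \<omega>)) \<partial>M)"
      by (simp add: nn_integral_distr flip: nn_integral_indicator)
    also have "\<dots> = (\<integral>\<^sup>+ v. (\<integral>\<^sup>+ \<omega>. indicator A (\<Phi> (Y \<omega>, v)) \<partial>M) \<partial>distr M T V)"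
      using nn_integral_indep_var[OF indep, of "\<lambda>p. indicator A (\<Phi> p)"] by simp
    also have "\<dots> = (\<integral>\<^sup>+ v. f v * (\<integral>\<^sup>+ \<omega>. indicator A (\<Phi> (Y \<omega>, v)) \<partial>M) \<partial>T)"
      by (simp add: distributed_distr_eq_density[OF V] nn_integral_density)
    also have "\<dots> = (\<integral>\<^sup>+ v. (\<integral>\<^sup>+ u. f v * K v u * indicator A u \<partial>R) \<partial>T)"
      by (simp add: mixand cong: nn_integral_cong)
    also have "\<dots> = (\<integral>\<^sup>+ u. (\<integral>\<^sup>+ v. f v * K v u \<partial>T) * indicator A u \<partial>R)"
    proof (subst TR.Fubini'[symmetric], simp, rule nn_integral_cong)
      fix u assume "u \<in> space R"
      then have "(\<lambda>v. f v * K v u) \<in> borel_measurable T"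
        by measurable
      then show "(\<integral>\<^sup>+ v. f v * K v u * indicator A u \<partial>T) = (\<integral>\<^sup>+ v. f v * K v u \<partial>T) * indicator A u"
        by (rule nn_integral_multc)
    qed
    also have "\<dots> = emeasure (density R (\<lambda>u. \<integral>\<^sup>+ v. f v * K v u \<partial>T)) A"
      by (simp add: emeasure_density)
    finally show ?thesis .
  qed
  moreover have "(\<lambda>u. \<integral>\<^sup>+ v. f v * K v u \<partial>T) \<in> borel_measurable R"
    by measurable
  ultimately show ?thesis
    unfolding distributed_def by (auto intro: measure_eqI)
qed

lemma (in prob_space) distributed_divide_indep:
  fixes X :: "'i \<Rightarrow> 'a \<Rightarrow> real" and V :: "'a \<Rightarrow> 'i \<Rightarrow> real"
    and h :: "'i \<Rightarrow> real \<Rightarrow> ennreal" and f :: "('i \<Rightarrow> real) \<Rightarrow> ennreal"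
  assumes "finite I" "I \<noteq> {}"
    and indep_X: "indep_vars (\<lambda>_. lborel) X I"
    and X: "\<And>i. i \<in> I \<Longrightarrow> distributed M lborel (X i) (h i)"
    and X_pos: "\<And>i t. i \<in> I \<Longrightarrow> t \<le> 0 \<Longrightarrow> h i t = 0"
    and V: "distributed M (PiM I (\<lambda>_. lborel)) V f"
    and V_pos: "\<And>v. v \<in> space (PiM I (\<lambda>_. lborel)) \<Longrightarrow> \<exists>i\<in>I. v i \<le> 0 \<Longrightarrow> f v = 0"
    and indep: "indep_var (PiM I (\<lambda>_. lborel)) (\<lambda>\<omega>. \<lambda>i\<in>I. X i \<omega>) (PiM I (\<lambda>_. lborel)) V"
  shows "distributed M (PiM I (\<lambda>_. lborel)) (\<lambda>\<omega>. \<lambda>i\<in>I. V \<omega> i / X i \<omega>)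
           (\<lambda>u. \<integral>\<^sup>+ v. f v * (\<Prod>i\<in>I. quotient_density (h i) (v i) (u i)) \<partial>PiM I (\<lambda>_. lborel))"
proof -
  have [measurable]: "h i \<in> borel_measurable borel" if "i \<in> I" for i
    using distributed_borel_measurable[OF X] that by simp
  have "distributed M (PiM I (\<lambda>_. lborel)) (\<lambda>\<omega>. (\<lambda>(x, v). \<lambda>i\<in>I. v i / x i) ((\<lambda>i\<in>I. X i \<omega>), V \<omega>))
           (\<lambda>u. \<integral>\<^sup>+ v. f v * (\<Prod>i\<in>I. quotient_density (h i) (v i) (u i)) \<partial>PiM I (\<lambda>_. lborel))"
  proof (rule distributed_indep_mixture[OF indep V])
    show "(\<lambda>(x, v). \<lambda>i\<in>I. v i / x i) \<in> measurable
        (PiM I (\<lambda>_. lborel) \<Otimes>\<^sub>M PiM I (\<lambda>_. lborel)) (PiM I (\<lambda>_. lborel :: real measure))"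
      by measurable
    show "sigma_finite_measure (PiM I (\<lambda>_. lborel :: real measure))"
      using \<open>finite I\<close> by (rule sigma_finite_PiM_lborel)
    fix v assume v: "v \<in> space (PiM I (\<lambda>_. lborel))" and "f v \<noteq> 0"
    then have "0 < v i" if "i \<in> I" for i
      using V_pos that by force
    then show "distr M (PiM I (\<lambda>_. lborel)) (\<lambda>\<omega>. (\<lambda>(x, v). \<lambda>i\<in>I. v i / x i) ((\<lambda>i\<in>I. X i \<omega>), v))
        = density (PiM I (\<lambda>_. lborel)) (\<lambda>u. \<Prod>i\<in>I. quotient_density (h i) (v i) (u i))"
      using distr_divide_indep_vars[OF \<open>finite I\<close> \<open>I \<noteq> {}\<close> indep_X X X_pos]
      by (simp cong: restrict_cong)
  qed (use \<open>finite I\<close> in \<open>simp_all add: sigma_finite_PiM_lborel\<close>)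
  then show ?thesis
    by (simp cong: restrict_cong)
qed

lemma beta1_density_divide:
  fixes \<zeta> \<alpha> c u :: real
  assumes "0 < c" "c < u"
  shows "beta1_density \<zeta> \<alpha> (c / u) * (c / u\<^sup>2)
       = Gamma (\<zeta> + \<alpha>) / (Gamma \<zeta> * Gamma \<alpha>) * u powr (- \<zeta> - \<alpha>) * ((u - c) powr (\<alpha> - 1) * c powr \<zeta>)"
proof -
  have u: "0 < u" "c / u < 1" "1 - c / u = (u - c) / u"
    using assms by (simp_all add: field_simps)
  have c_pow: "(c / u) powr (\<zeta> - 1) = c powr \<zeta> * u / (c * u powr \<zeta>)"
    using assms u by (simp add: powr_divide powr_diff)
  have uc_pow: "(1 - c / u) powr (\<alpha> - 1) = (u - c) powr (\<alpha> - 1) * u / u powr \<alpha>"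
    using assms u by (simp add: powr_divide powr_diff)
  have u_pow: "u powr (- \<zeta> - \<alpha>) = 1 / (u powr \<zeta> * u powr \<alpha>)"
    using powr_add[of u "- \<zeta>" "- \<alpha>"] by (simp add: powr_minus divide_inverse)
  show ?thesis
    using assms u unfolding beta1_density_def c_pow uc_pow u_pow
    by (simp add: power2_eq_square ac_simps)
qed

lemma beta1_density_nonneg: "0 < \<zeta> \<Longrightarrow> 0 < \<alpha> \<Longrightarrow> 0 \<le> beta1_density \<zeta> \<alpha> x"
  by (simp add: beta1_density_def Gamma_real_pos less_imp_le)

lemma quotient_density_beta1:
  fixes \<zeta> \<alpha> c u :: real
  assumes "0 < \<zeta>" "0 < \<alpha>" "0 < u" "0 \<le> c"
  shows "quotient_density (\<lambda>x. ennreal (beta1_density \<zeta> \<alpha> x)) c u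
       = ennreal (Gamma (\<zeta> + \<alpha>) / (Gamma \<zeta> * Gamma \<alpha>) * u powr (- \<zeta> - \<alpha>)
           * (indicator {0..u} c * ((u - c) powr (\<alpha> - 1) * c powr \<zeta>)))"
proof (cases "0 < c \<and> c < u")
  case True
  have "quotient_density (\<lambda>x. ennreal (beta1_density \<zeta> \<alpha> x)) c u
      = ennreal (beta1_density \<zeta> \<alpha> (c / u) * (c / u\<^sup>2))"
    using assms beta1_density_nonneg[of \<zeta> \<alpha> "c / u"]
    unfolding quotient_density_def by (subst ennreal_mult) simp_all
  then show ?thesis
    using True beta1_density_divide[of c u \<zeta> \<alpha>] by simp
next
  case False
  then consider "c = 0" | "c = u" | "u < c"
    using assms by linarith
  then show ?thesis
    using assms by cases (simp_all add: quotient_density_def beta1_density_def)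
qed

lemma prod_quotient_density_beta1:
  fixes \<zeta> \<alpha> u v :: "nat \<Rightarrow> real"
  assumes "\<And>j. j < k \<Longrightarrow> 0 < \<zeta> j" "\<And>j. j < k \<Longrightarrow> 0 < \<alpha> j"
    and "\<And>j. j < k \<Longrightarrow> 0 < u j" "\<And>j. j < k \<Longrightarrow> 0 \<le> v j" "v \<in> extensional {..<k}"
  shows "(\<Prod>j<k. quotient_density (\<lambda>x. ennreal (beta1_density (\<zeta> j) (\<alpha> j) x)) (v j) (u j))
       = ennreal ((\<Prod>j<k. Gamma (\<zeta> j + \<alpha> j) / (Gamma (\<zeta> j) * Gamma (\<alpha> j)) * u j powr (- \<zeta> j - \<alpha> j))
           * (indicator (PiE {..<k} (\<lambda>j. {0..u j})) v
              * (\<Prod>j<k. (u j - v j) powr (\<alpha> j - 1) * v j powr \<zeta> j)))"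
proof -
  have "(\<Prod>j<k. quotient_density (\<lambda>x. ennreal (beta1_density (\<zeta> j) (\<alpha> j) x)) (v j) (u j))
      = ennreal (\<Prod>j<k. Gamma (\<zeta> j + \<alpha> j) / (Gamma (\<zeta> j) * Gamma (\<alpha> j)) * u j powr (- \<zeta> j - \<alpha> j)
           * (indicator {0..u j} (v j) * ((u j - v j) powr (\<alpha> j - 1) * v j powr \<zeta> j)))"
  proof (subst prod_ennreal[symmetric])
    show "0 \<le> Gamma (\<zeta> j + \<alpha> j) / (Gamma (\<zeta> j) * Gamma (\<alpha> j)) * u j powr (- \<zeta> j - \<alpha> j)
           * (indicator {0..u j} (v j) * ((u j - v j) powr (\<alpha> j - 1) * v j powr \<zeta> j))"
      if "j \<in> {..<k}" for j
      using assms that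
      by (auto intro!: mult_nonneg_nonneg divide_nonneg_nonneg less_imp_le[OF Gamma_real_pos] add_pos_pos)
  qed (use assms in \<open>simp add: quotient_density_beta1\<close>)
  also have "\<dots> = ennreal ((\<Prod>j<k. Gamma (\<zeta> j + \<alpha> j) / (Gamma (\<zeta> j) * Gamma (\<alpha> j)) * u j powr (- \<zeta> j - \<alpha> j))
           * (indicator (PiE {..<k} (\<lambda>j. {0..u j})) v
              * (\<Prod>j<k. (u j - v j) powr (\<alpha> j - 1) * v j powr \<zeta> j)))"
    by (simp only: prod.distrib indicator_PiE_eq_prod[OF finite_lessThan assms(5)])
  finally show ?thesis .
qed

lemma kober_eq_nn_integral_quotient_density:
  fixes \<zeta> \<alpha> u :: "nat \<Rightarrow> real" and f :: "(nat \<Rightarrow> real) \<Rightarrow> real"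
  assumes \<zeta>: "\<And>j. j < k \<Longrightarrow> 0 < \<zeta> j" and \<alpha>: "\<And>j. j < k \<Longrightarrow> 0 < \<alpha> j"
    and u: "\<And>j. j < k \<Longrightarrow> 0 < u j"
    and f_nonneg: "\<And>v. 0 \<le> f v" and [measurable]: "f \<in> borel_measurable (lborelk k)"
    and f_pos: "\<And>v. v \<in> space (lborelk k) \<Longrightarrow> \<exists>j<k. v j \<le> 0 \<Longrightarrow> f v = 0"
  shows "(\<Prod>j<k. Gamma (\<zeta> j) / Gamma (\<zeta> j + \<alpha> j))
       * enn2real (\<integral>\<^sup>+ v. ennreal (f v)
           * (\<Prod>j<k. quotient_density (\<lambda>x. ennreal (beta1_density (\<zeta> j) (\<alpha> j) x)) (v j) (u j)) \<partial>lborelk k)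
       = kober k \<zeta> \<alpha> f u"
proof -
  define C where "C = (\<Prod>j<k. Gamma (\<zeta> j + \<alpha> j) / (Gamma (\<zeta> j) * Gamma (\<alpha> j)) * u j powr (- \<zeta> j - \<alpha> j))"
  define W where "W v = indicator (PiE {..<k} (\<lambda>j. {0..u j})) v
      * (\<Prod>j<k. (u j - v j) powr (\<alpha> j - 1) * v j powr \<zeta> j) * f v" for v
  have C_nonneg: "0 \<le> C"
    unfolding C_def using \<zeta> \<alpha>
    by (auto intro!: prod_nonneg mult_nonneg_nonneg divide_nonneg_nonneg less_imp_le[OF Gamma_real_pos] add_pos_pos)
  have W_nonneg: "0 \<le> W v" for v
    unfolding W_def using f_nonneg by (auto intro!: mult_nonneg_nonneg prod_nonneg)
  have [measurable]: "W \<in> borel_measurable (lborelk k)"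
    unfolding W_def by measurable
  have integrand: "ennreal (f v)
      * (\<Prod>j<k. quotient_density (\<lambda>x. ennreal (beta1_density (\<zeta> j) (\<alpha> j) x)) (v j) (u j))
      = ennreal C * ennreal (W v)" if "v \<in> space (lborelk k)" for v
  proof (cases "\<exists>j<k. v j \<le> 0")
    case True
    then show ?thesis using f_pos[OF that] by (simp add: W_def)
  next
    case False
    let ?X = "indicator (PiE {..<k} (\<lambda>j. {0..u j})) v * (\<Prod>j<k. (u j - v j) powr (\<alpha> j - 1) * v j powr \<zeta> j)"
    have "(\<Prod>j<k. quotient_density (\<lambda>x. ennreal (beta1_density (\<zeta> j) (\<alpha> j) x)) (v j) (u j))
        = ennreal (C * ?X)"
      unfolding C_def using False that \<zeta> \<alpha> u
      by (intro prod_quotient_density_beta1) (auto simp: space_PiM PiE_iff)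
    moreover have "0 \<le> ?X"
      by (auto intro!: mult_nonneg_nonneg prod_nonneg)
    ultimately show ?thesis
      using f_nonneg C_nonneg by (simp add: W_def ac_simps flip: ennreal_mult)
  qed
  have "enn2real (\<integral>\<^sup>+ v. ennreal (f v)
      * (\<Prod>j<k. quotient_density (\<lambda>x. ennreal (beta1_density (\<zeta> j) (\<alpha> j) x)) (v j) (u j)) \<partial>lborelk k)
      = C * (LINT v | lborelk k. W v)"
    using C_nonneg W_nonneg
    by (simp add: integrand nn_integral_cmult integral_eq_nn_integral enn2real_mult
        cong: nn_integral_cong)
  moreover have "(\<Prod>j<k. Gamma (\<zeta> j) / Gamma (\<zeta> j + \<alpha> j)) * C
      = (\<Prod>j<k. u j powr (- \<zeta> j - \<alpha> j) / Gamma (\<alpha> j))"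
    unfolding C_def prod.distrib[symmetric]
    using \<zeta> \<alpha> by (intro prod.cong refl) (simp add: Gamma_real_pos add_pos_pos less_imp_neq[symmetric])
  ultimately show ?thesis
    by (simp add: kober_def set_lebesgue_integral_def W_def mult.assoc)
qed

theorem theorem2p1:
  fixes M :: "'a measure" and k :: nat
    and \<zeta> \<alpha> :: "nat \<Rightarrow> real"
    and X :: "nat \<Rightarrow> 'a \<Rightarrow> real"
    and V :: "'a \<Rightarrow> (nat \<Rightarrow> real)"
    and f g :: "(nat \<Rightarrow> real) \<Rightarrow> real"
  assumes "prob_space M"
    and "k \<ge> 1"
    and "\<And>j. j < k \<Longrightarrow> \<zeta> j > 0"
    and "\<And>j. j < k \<Longrightarrow> \<alpha> j > 0"
    and "\<And>j. j < k \<Longrightarrow>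
           distributed M lborel (X j) (\<lambda>x. ennreal (beta1_density (\<zeta> j) (\<alpha> j) x))"
    and "prob_space.indep_vars M (\<lambda>_. lborel) X {..<k}"
    and "\<And>v. f v \<ge> 0"
    and "\<And>v. v \<in> space (lborelk k) \<Longrightarrow> (\<exists>j<k. v j \<le> 0) \<Longrightarrow> f v = 0"
    and "distributed M (lborelk k) V (\<lambda>v. ennreal (f v))"
    and "prob_space.indep_var M
           (lborelk k) (\<lambda>\<omega>. restrict (\<lambda>j. X j \<omega>) {..<k}) (lborelk k) V"
    and "\<And>u. g u \<ge> 0"
    and "distributed M (lborelk k) (\<lambda>\<omega>. restrict (\<lambda>j. V \<omega> j / X j \<omega>) {..<k})
           (\<lambda>u. ennreal (g u))"
  shows "AE u in lborelk k. (\<forall>j<k. u j > 0) \<longrightarrow>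
           (\<Prod>j<k. Gamma (\<zeta> j) / Gamma (\<zeta> j + \<alpha> j)) * g u = kober k \<zeta> \<alpha> f u"
proof -
  interpret prob_space M by fact
  have f_measurable: "f \<in> borel_measurable (lborelk k)"
    using distributed_borel_measurable[OF assms(9)] assms(7) by simp
  let ?q = "\<lambda>u. \<integral>\<^sup>+ v. ennreal (f v)
      * (\<Prod>j<k. quotient_density (\<lambda>x. ennreal (beta1_density (\<zeta> j) (\<alpha> j) x)) (v j) (u j)) \<partial>lborelk k"
  have "distributed M (lborelk k) (\<lambda>\<omega>. restrict (\<lambda>j. V \<omega> j / X j \<omega>) {..<k}) ?q"
  proof (rule distributed_divide_indep)
    show "{..<k} \<noteq> {}"
      using \<open>k \<ge> 1\<close> by (auto simp: lessThan_empty_iff)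
    show "ennreal (f v) = 0" if "v \<in> space (lborelk k)" "\<exists>j\<in>{..<k}. v j \<le> 0" for v
      using that assms(8)[of v] by force
  qed (use assms in \<open>auto simp: beta1_density_def\<close>)
  then have "AE u in lborelk k. ennreal (g u) = ?q u"
    using assms(12) distributed_unique by blast
  then show ?thesis
  proof (eventually_elim, intro impI)
    case (elim u)
    assume "\<forall>j<k. 0 < u j"
    then have "g u = enn2real (?q u)"
      using elim(1) assms(11) by (metis enn2real_ennreal)
    then show "(\<Prod>j<k. Gamma (\<zeta> j) / Gamma (\<zeta> j + \<alpha> j)) * g u = kober k \<zeta> \<alpha> f u"
      using \<open>\<forall>j<k. 0 < u j\<close> assms(3,4,7,8) f_measurable
      by (simp add: kober_eq_nn_integral_quotient_density)
  qed
qed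

end
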